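(* Let $n=2m+2$ with $m\ge0$, let $a,b,c,d\in\mathbb{C}$, and suppose $T_n$ (degree $n$) and $U_{n-2}$ (degree at most $n-2$) satisfy $T_n^2-HU_{n-2}^2=1$ with $$T_n(z)=1-\frac{2(z-c)(z-d)\prod_{j=1}^m(z-x_j)^2}{(a-c)(a-d)\prod_{j=1}^m(a-x_j)^2}=-1+\frac{2(z-a)(z-b)\prod_{j=1}^m(z-y_j)^2}{(c-a)(c-b)\prod_{j=1}^m(c-y_j)^2}$$ for some $x_1,\dots,x_m,y_1,\dots,y_m\in\mathbb{C}$. Put $s_k:=\tfrac12\bigl(a^k+b^k+c^k-d^k\bigr)$, $k=1,\dots,2m+1$, and form $F_k,\mathbf F,\mathbf F_i$ with $\nu=m+1$, $\mu=m$. Then $\det\mathbf F\ne0$ and $y_1,\dots,y_m$ (with multiplicity) are exactly the zeros of $$y^{m}\det\mathbf F+y^{m-1}\det\mathbf F_1+\dots+y\det\mathbf F_{m-1}+\det\mathbf F_m.$$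
   Context: $H(z)=(z-a)(z-b)(z-c)(z-d)$. Given complex numbers $s_1,s_2,\dots$: $F_0:=1$, $F_k:=0$ for $k<0$, and for $k\ge1$, $F_k:=\frac{(-1)^k}{k!}\det M_k$ where $M_k$ is the $k\times k$ matrix with entry $s_{i-j+1}$ for $j\le i$, entry $i$ at position $(i,i+1)$, and $0$ elsewhere. For integers $\nu\ge0,\mu\ge0$, $\mathbf F$ is the $\mu\times\mu$ matrix with $(i,j)$ entry $F_{\nu+i-j}$, and $\mathbf F_i$ ($1\le i\le\mu$) is $\mathbf F$ with its $i$-th column replaced by $(-F_{\nu+1},\dots,-F_{\nu+\mu})^T$. Convention: if $\mu=0$, $\det\mathbf F:=1$. *)

theory Defs
  imports "Jordan_Normal_Form.Determinant" "HOL-Computational_Algebra.Polynomial"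
begin

definition Mmat :: "(nat \<Rightarrow> complex) \<Rightarrow> nat \<Rightarrow> complex mat" where
  "Mmat s k = mat k k (\<lambda>(r, c). let i = r + 1; j = c + 1 in
      if j \<le> i then s (i - j + 1) else if j = i + 1 then of_nat i else 0)"

definition Fseq :: "(nat \<Rightarrow> complex) \<Rightarrow> int \<Rightarrow> complex" where
  "Fseq s k = (if k < 0 then 0 else if k = 0 then 1
      else (-1) ^ nat k / of_nat (fact (nat k)) * det (Mmat s (nat k)))"

definition FFmat :: "(nat \<Rightarrow> complex) \<Rightarrow> nat \<Rightarrow> nat \<Rightarrow> complex mat" where
  "FFmat s \<nu> \<mu> = mat \<mu> \<mu> (\<lambda>(r, c). Fseq s (int \<nu> + int r - int c))"

definition FFimat :: "(nat \<Rightarrow> complex) \<Rightarrow> nat \<Rightarrow> nat \<Rightarrow> nat \<Rightarrow> complex mat" where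
  "FFimat s \<nu> \<mu> i = mat \<mu> \<mu> (\<lambda>(r, c).
      if c + 1 = i then - Fseq s (int \<nu> + int r + 1) else Fseq s (int \<nu> + int r - int c))"

definition Hpoly :: "complex \<Rightarrow> complex \<Rightarrow> complex \<Rightarrow> complex \<Rightarrow> complex poly" where
  "Hpoly a b c d = [:-a, 1:] * [:-b, 1:] * [:-c, 1:] * [:-d, 1:]"

end

theory Submission
  imports Defs "HOL-Computational_Algebra.Polynomial_FPS"
begin

text \<open>
  By Newton's identities the \<open>F\<^sub>k\<close> are the Taylor coefficients of
  \<open>G = exp (- \<Sum>k. s\<^sub>k z\<^sup>k / k)\<close>, and for the given power sums
  \<open>G\<^sup>2 = (1 - a z) (1 - b z) (1 - c z) / (1 - d z)\<close>.
  Adding the two representations of \<open>T\<close> gives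
  \<open>\<alpha> (z - a) (z - b) Q\<^sup>2 + \<beta> (z - c) (z - d) P\<^sup>2 = 2\<close> with \<open>Q = \<Prod>(z - y\<^sub>j)\<close>, \<open>P = \<Prod>(z - x\<^sub>j)\<close>,
  and \<open>\<beta> = -\<alpha>\<close> by comparing leading coefficients.
  Reversing (\<open>z \<mapsto> 1/z\<close>, formal degree \<open>2m + 2\<close>) and multiplying by \<open>1 - d z\<close> shows that
  \<open>(Q\<^sup>* G)\<^sup>2 - ((1 - c z) P\<^sup>*)\<^sup>2\<close> is \<open>z\<^sup>2\<^sup>m\<^sup>+\<^sup>2\<close> times a unit, so \<open>Q\<^sup>* G\<close> agrees with the polynomial
  \<open>(1 - c z) P\<^sup>*\<close> of degree \<open>m + 1\<close> below \<open>z\<^sup>2\<^sup>m\<^sup>+\<^sup>2\<close>: \<open>Q\<^sup>*\<close> is the denominator of a Pade approximant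
  of \<open>G\<close>. The vanishing coefficients \<open>m + 2, \<dots>, 2m + 1\<close> of \<open>Q\<^sup>* G\<close> form the Toeplitz system with
  matrix \<open>\<^bold>F\<close>, and Cramer's rule gives the coefficients of \<open>Q\<^sup>*\<close>, i.e. of \<open>Q\<close>.
  A kernel vector of \<open>\<^bold>F\<close> would give a second polynomial with the same gap; cross-multiplying
  forces all \<open>y\<^sub>j\<close> to be roots of its reversal, which has degree \<open>< m\<close>, because no \<open>y\<^sub>j\<close> is a root
  of \<open>(z - c) P\<close> (there \<open>T = 1\<close>, while \<open>T (y\<^sub>j) = -1\<close>).
\<close>

section \<open>Newton's identities\<close>

definition M_entry :: "(nat \<Rightarrow> complex) \<Rightarrow> nat \<Rightarrow> nat \<Rightarrow> complex" where
  "M_entry s r c = (if c \<le> r then s (r - c + 1) else if c = r + 1 then of_nat (r + 1) else 0)"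

lemma Mmat_eq: "Mmat s k = mat k k (\<lambda>(r, c). M_entry s r c)"
  unfolding Mmat_def M_entry_def by (rule eq_matI) (auto simp: Let_def)

definition Mmat_last_row :: "(nat \<Rightarrow> complex) \<Rightarrow> nat \<Rightarrow> (nat \<Rightarrow> complex) \<Rightarrow> complex mat" where
  "Mmat_last_row s k w = mat k k (\<lambda>(r, c). if Suc r = k then w c else M_entry s r c)"

lemma Mmat_eq_last_row: "k \<ge> 1 \<Longrightarrow> Mmat s k = Mmat_last_row s k (\<lambda>c. s (k - c))"
  unfolding Mmat_eq Mmat_last_row_def by (rule eq_matI) (auto simp: M_entry_def Suc_diff_le)

lemma det_Mmat_last_row_Suc:
  assumes k: "k \<ge> 1"
  shows "det (Mmat_last_row s (Suc k) w) = w k * det (Mmat s k) - of_nat k * det (Mmat_last_row s k w)"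
proof -
  let ?A = "Mmat_last_row s (Suc k) w"
  have A: "?A \<in> carrier_mat (Suc k) (Suc k)" by (simp add: Mmat_last_row_def)
  have "det ?A = (\<Sum>i<Suc k. ?A $$ (i, k) * cofactor ?A i k)"
    by (rule laplace_expansion_column[OF A]) simp
  also have "\<dots> = (\<Sum>i\<in>{k - 1, k}. ?A $$ (i, k) * cofactor ?A i k)"
  proof (rule sum.mono_neutral_right)
    show "\<forall>i\<in>{..<Suc k} - {k - 1, k}. ?A $$ (i, k) * cofactor ?A i k = 0"
      by (auto simp: Mmat_last_row_def M_entry_def)
  qed auto
  also have "\<dots> = of_nat k * cofactor ?A (k - 1) k + w k * cofactor ?A k k"
    using k by (auto simp: Mmat_last_row_def M_entry_def)
  also have "cofactor ?A k k = det (Mmat s k)"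
  proof -
    have "mat_delete ?A k k = Mmat s k"
      unfolding Mmat_eq Mmat_last_row_def mat_delete_def by (rule eq_matI) auto
    then show ?thesis by (simp add: cofactor_def)
  qed
  also have "cofactor ?A (k - 1) k = - det (Mmat_last_row s k w)"
  proof -
    have "mat_delete ?A (k - 1) k = Mmat_last_row s k w"
      unfolding Mmat_last_row_def mat_delete_def by (rule eq_matI) (auto simp: M_entry_def)
    moreover have "k - 1 + k = Suc (2 * (k - 1))" using k by simp
    ultimately show ?thesis by (simp add: cofactor_def)
  qed
  finally show ?thesis by simp
qed

lemma det_Mmat_eq_Fseq: "det (Mmat s k) = (-1) ^ k * fact k * Fseq s (int k)"
  by (cases "k = 0") (simp_all add: Fseq_def Mmat_def det_def)

lemma det_Mmat_last_row:
  "k \<ge> 1 \<Longrightarrow> det (Mmat_last_row s k w) = (-1) ^ (k + 1) * fact (k - 1) * (\<Sum>j<k. w j * Fseq s (int j))"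
proof (induction k rule: dec_induct)
  case base
  show ?case by (simp add: Mmat_last_row_def det_def Fseq_def)
next
  case (step k)
  then show ?case
    by (simp add: det_Mmat_last_row_Suc det_Mmat_eq_Fseq algebra_simps fact_reduce[of k])
qed

lemma Fseq_recurrence:
  assumes "k \<ge> 1"
  shows "of_nat k * Fseq s (int k) = - (\<Sum>j<k. s (k - j) * Fseq s (int j))"
proof -
  have "Fseq s (int k) = (-1) ^ k / fact k * det (Mmat s k)"
    using assms by (simp add: Fseq_def)
  also have "\<dots> = - (fact (k - 1) / fact k) * (\<Sum>j<k. s (k - j) * Fseq s (int j))"
    by (simp add: Mmat_eq_last_row[OF assms] det_Mmat_last_row[OF assms] power_add)
  also have "fact (k - 1) / fact k = (1 / of_nat k :: complex)"
    using assms by (cases k) auto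
  finally show ?thesis using assms by simp
qed

section \<open>The generating series\<close>

no_notation vec_index (infixl "$" 100)
notation fps_nth (infixl "$" 75)
definition Fseq_fps :: "(nat \<Rightarrow> complex) \<Rightarrow> complex fps" where
  "Fseq_fps s = Abs_fps (\<lambda>k. Fseq s (int k))"

lemma Fseq_fps_nth_0 [simp]: "Fseq_fps s $ 0 = 1"
  by (simp add: Fseq_fps_def Fseq_def)

lemma fps_deriv_Fseq_fps: "fps_deriv (Fseq_fps s) = - (Abs_fps (\<lambda>k. s (k + 1)) * Fseq_fps s)"
proof (rule fps_ext)
  fix n
  have "fps_deriv (Fseq_fps s) $ n = - (\<Sum>j<Suc n. s (Suc n - j) * Fseq s (int j))"
    by (simp add: Fseq_fps_def Fseq_recurrence del: of_nat_Suc)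
  also have "(\<Sum>j<Suc n. s (Suc n - j) * Fseq s (int j)) = (\<Sum>i\<le>n. s (i + 1) * Fseq s (int (n - i)))"
    by (rule sum.reindex_bij_witness[of _ "\<lambda>i. n - i" "\<lambda>i. n - i"]) (auto simp: Suc_diff_le)
  finally show "fps_deriv (Fseq_fps s) $ n = (- (Abs_fps (\<lambda>k. s (k + 1)) * Fseq_fps s)) $ n"
    by (simp add: fps_mult_nth Fseq_fps_def atLeast0AtMost)
qed

lemma fps_eq_0_if_deriv_eq_mult:
  fixes K H :: "'a::field_char_0 fps"
  assumes deriv: "fps_deriv K = H * K" and "K $ 0 = 0"
  shows "K = 0"
proof -
  have "\<forall>j\<le>n. K $ j = 0" for n
  proof (induction n)
    case 0
    then show ?case using assms(2) by simp
  next
    case (Suc n)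
    have "of_nat (Suc n) * K $ Suc n = (\<Sum>i=0..n. H $ i * K $ (n - i))"
      using fps_deriv_nth[of K n] unfolding deriv fps_mult_nth by simp
    also have "\<dots> = 0" using Suc.IH by (intro sum.neutral) auto
    finally show ?case using Suc.IH le_Suc_eq by (auto simp del: of_nat_Suc)
  qed
  then show ?thesis by (intro fps_ext) auto
qed

abbreviation one_minus :: "'a::comm_ring_1 \<Rightarrow> 'a fps" where
  "one_minus a \<equiv> 1 - fps_const a * fps_X"

lemma one_minus_mult_geometric: "one_minus a * Abs_fps (\<lambda>k. a ^ (k + 1)) = fps_const a"
proof (rule fps_ext)
  fix n
  have "one_minus a * Abs_fps (\<lambda>k. a ^ (k + 1))
        = Abs_fps (\<lambda>k. a ^ (k + 1)) - fps_const a * (fps_X * Abs_fps (\<lambda>k. a ^ (k + 1)))"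
    by (simp add: algebra_simps)
  then show "(one_minus a * Abs_fps (\<lambda>k. a ^ (k + 1))) $ n = fps_const a $ n"
    by (cases n) (simp_all add: fps_X_mult_nth)
qed

text \<open>\<open>G\<^sup>2\<close> and \<open>(1 - a X) (1 - b X) (1 - c X) / (1 - d X)\<close> both have constant term 1 and
  logarithmic derivative \<open>-2 \<Sum>k. s (k + 1) X\<^sup>k\<close>.\<close>
lemma Fseq_fps_power_sums_square:
  fixes a b c d :: complex
  assumes s: "s = (\<lambda>k. (a ^ k + b ^ k + c ^ k - d ^ k) / 2)"
  shows "Fseq_fps s ^ 2 * one_minus d = one_minus a * one_minus b * one_minus c"
proof -
  define geo where "geo e = Abs_fps (\<lambda>k. e ^ (k + 1))" for e :: complex
  define S where "S = Abs_fps (\<lambda>k. s (k + 1))"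
  define L where "L = one_minus a * one_minus b * one_minus c"
  define M where "M = one_minus d"
  define G where "G = Fseq_fps s"
  define K where "K = G ^ 2 * M - L"
  have S: "2 * S = geo a + geo b + geo c - geo d"
    by (rule fps_ext) (simp add: s S_def geo_def numeral_fps_const)
  have deriv: "fps_deriv (one_minus e) = - (one_minus e * geo e)" for e
    unfolding geo_def one_minus_mult_geometric by simp
  have log_deriv: "2 * S * L * M = - fps_deriv L * M + L * fps_deriv M"
    unfolding S L_def M_def fps_deriv_mult deriv by (simp add: algebra_simps del: fps_const_mult)
  have G_deriv: "fps_deriv G = - (S * G)"
    unfolding G_def S_def by (rule fps_deriv_Fseq_fps)
  have "L * fps_deriv K = - (2 * S * L * M) * G ^ 2 + L * G ^ 2 * fps_deriv M - L * fps_deriv L"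
    by (simp add: K_def G_deriv algebra_simps power2_eq_square)
  also have "\<dots> = fps_deriv L * K"
    by (simp only: log_deriv) (simp add: K_def algebra_simps power2_eq_square)
  finally have "L * fps_deriv K = fps_deriv L * K" .
  moreover have "L $ 0 = 1" by (simp add: L_def)
  ultimately have "fps_deriv K = (inverse L * fps_deriv L) * K"
    by (metis inverse_mult_eq_1 mult.assoc mult_1 one_neq_zero)
  moreover have "K $ 0 = 0" by (simp add: K_def L_def M_def G_def power2_eq_square)
  ultimately have "K = 0" by (rule fps_eq_0_if_deriv_eq_mult)
  then show ?thesis by (simp add: K_def G_def M_def L_def)
qed

section \<open>Reversal and linear factors\<close>

lemma poly_eq_if_eval_nonzero_eq:
  fixes p q :: "'a::field_char_0 poly"
  assumes "\<And>t. t \<noteq> 0 \<Longrightarrow> poly p t = poly q t"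
  shows "p = q"
proof (rule ccontr)
  assume "p \<noteq> q"
  then have "finite {t. poly (p - q) t = 0}" by (intro poly_roots_finite) simp
  moreover have "UNIV \<subseteq> insert 0 {t. poly (p - q) t = 0}" using assms by auto
  ultimately have "finite (UNIV :: 'a set)" by (meson finite_insert finite_subset)
  with infinite_UNIV_char_0 show False by blast
qed

text \<open>\<open>z\<^sup>n p (1/z)\<close> for a fixed formal degree \<open>n\<close>; unlike \<open>reflect_poly\<close> it does not drop
  factors \<open>z\<close> when \<open>degree p < n\<close>.\<close>
definition poly_reverse :: "nat \<Rightarrow> 'a::comm_ring_1 poly \<Rightarrow> 'a poly" where
  "poly_reverse n p = (\<Sum>k\<le>n. monom (coeff p k) (n - k))"

lemma coeff_poly_reverse: "coeff (poly_reverse n p) k = (if k \<le> n then coeff p (n - k) else 0)"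
proof -
  have "coeff (poly_reverse n p) k = (\<Sum>j\<le>n. if j = n - k \<and> k \<le> n then coeff p j else 0)"
    unfolding poly_reverse_def coeff_sum coeff_monom by (intro sum.cong) auto
  then show ?thesis by (simp add: sum.delta')
qed

lemma degree_poly_reverse_le: "degree (poly_reverse n p) \<le> n"
  by (rule degree_le) (simp add: coeff_poly_reverse)

lemma poly_reverse_0 [simp]: "poly_reverse n 0 = 0"
  by (simp add: poly_reverse_def)

lemma poly_reverse_poly_reverse: "degree p \<le> n \<Longrightarrow> poly_reverse n (poly_reverse n p) = p"
  by (rule poly_eqI) (auto simp: coeff_poly_reverse coeff_eq_0)

lemma smult_sum_right: "smult c (\<Sum>i\<in>A. f i) = (\<Sum>i\<in>A. smult c (f i))"
  by (induction A rule: infinite_finite_induct) (simp_all add: smult_add_right)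

lemma poly_reverse_linear: "poly_reverse 1 [:u, v:] = [:v, u:]"
  by (rule poly_eqI) (simp add: coeff_poly_reverse coeff_pCons split: nat.split)

lemma poly_poly_reverse:
  fixes p :: "'a::field poly"
  assumes "degree p \<le> n" "z \<noteq> 0"
  shows "poly (poly_reverse n p) z = z ^ n * poly p (1 / z)"
proof -
  have "poly (poly_reverse n p) z = (\<Sum>k\<le>n. z ^ n * (coeff p k * (1 / z) ^ k))"
  proof (unfold poly_reverse_def poly_sum poly_monom, rule sum.cong)
    fix k assume "k \<in> {..n}"
    then have "z ^ n = z ^ (n - k) * z ^ k" by (simp flip: power_add)
    then show "coeff p k * z ^ (n - k) = z ^ n * (coeff p k * (1 / z) ^ k)"
      using assms(2) by (simp add: power_one_over field_simps)
  qed simp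
  also have "\<dots> = z ^ n * poly p (1 / z)"
  proof -
    have "poly p w = (\<Sum>k\<le>n. coeff p k * w ^ k)" for w
      unfolding poly_altdef by (rule sum.mono_neutral_left) (use assms(1) in \<open>auto simp: coeff_eq_0\<close>)
    then show ?thesis by (simp add: sum_distrib_left)
  qed
  finally show ?thesis .
qed

lemma poly_reverse_mult:
  fixes p q :: "'a::field_char_0 poly"
  assumes "degree p \<le> n" "degree q \<le> k"
  shows "poly_reverse (n + k) (p * q) = poly_reverse n p * poly_reverse k q"
proof (rule poly_eq_if_eval_nonzero_eq)
  fix z :: 'a assume z: "z \<noteq> 0"
  have "degree (p * q) \<le> n + k"
    using degree_mult_le[of p q] assms by simp
  then show "poly (poly_reverse (n + k) (p * q)) z = poly (poly_reverse n p * poly_reverse k q) z"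
    using assms z by (simp add: poly_poly_reverse power_add)
qed

lemma prod_linear_degree:
  "finite J \<Longrightarrow> degree (\<Prod>j\<in>J. [:- y j, 1:] :: 'a::idom poly) = card J"
  by (subst degree_prod_eq_sum_degree) auto

lemma prod_linear_lead_coeff: "lead_coeff (\<Prod>j\<in>J. [:- y j, 1:] :: 'a::idom poly) = 1"
  by (simp add: lead_coeff_prod)

lemma poly_prod_linear_square:
  fixes u :: "'b \<Rightarrow> 'a::comm_ring_1"
  shows "poly (\<Prod>j\<in>J. [:- u j, 1:]) z ^ 2 = (\<Prod>j\<in>J. (z - u j) ^ 2)"
  by (simp add: poly_prod prod_power_distrib)

lemma prod_linear_dvd_cancel:
  fixes R V :: "'a::idom poly"
  assumes "finite J" "\<And>j. j \<in> J \<Longrightarrow> poly V (y j) \<noteq> 0"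
    and "(\<Prod>j\<in>J. [:- y j, 1:]) dvd R * V"
  shows "(\<Prod>j\<in>J. [:- y j, 1:]) dvd R"
  using assms
proof (induction J arbitrary: R rule: finite_induct)
  case (insert j J)
  then have "poly R (y j) = 0"
    by (metis dvd_mult_left insert_iff mult_eq_0_iff poly_eq_0_iff_dvd poly_mult prod.insert)
  then obtain R' where R': "R = [:- y j, 1:] * R'" by (auto simp: poly_eq_0_iff_dvd)
  define l where "l = [:- y j, 1:]"
  have "l * (\<Prod>i\<in>J. [:- y i, 1:]) dvd l * (R' * V)"
    using insert.prems(2) unfolding R' l_def prod.insert[OF insert.hyps] by (simp only: mult.assoc)
  moreover have "l \<noteq> 0" by (simp add: l_def)
  ultimately have "(\<Prod>i\<in>J. [:- y i, 1:]) dvd R' * V" by simp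
  then have "(\<Prod>i\<in>J. [:- y i, 1:]) dvd R'" using insert by blast
  then show ?case unfolding R' prod.insert[OF insert.hyps] by (rule mult_dvd_mono[OF dvd_refl])
qed simp

lemma poly_reverse_eq_0_of_prod_dvd:
  fixes R :: "'a::idom poly"
  assumes "coeff R 0 = 0" and dvd: "(\<Prod>j=1..m. [:- y j, 1:]) dvd poly_reverse m R"
  shows "poly_reverse m R = 0"
proof (rule ccontr)
  assume nz: "poly_reverse m R \<noteq> 0"
  have "degree (\<Prod>j=1..m. [:- y j, 1:]) = m"
    by (simp add: prod_linear_degree)
  then have "m \<le> degree (poly_reverse m R)" using dvd_imp_degree_le[OF dvd nz] by simp
  then have "degree (poly_reverse m R) = m" using degree_poly_reverse_le[of m R] by simp
  then have "lead_coeff (poly_reverse m R) = 0" using assms(1) by (simp add: coeff_poly_reverse)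
  with nz show False by simp
qed

lemma poly_reverse_prod_linear:
  fixes y :: "nat \<Rightarrow> 'a::idom"
  shows "coeff (poly_reverse m (\<Prod>j=1..m. [:- y j, 1:])) 0 = 1"
    and "poly_reverse m (poly_reverse m (\<Prod>j=1..m. [:- y j, 1:])) = (\<Prod>j=1..m. [:- y j, 1:])"
  using prod_linear_lead_coeff[of y "{1..m}"]
  by (simp_all add: coeff_poly_reverse prod_linear_degree poly_reverse_poly_reverse)

lemma poly_reverse_linear_mult:
  fixes P :: "'a::field_char_0 poly"
  assumes "degree P \<le> m"
  shows "degree ([:1, -c:] * poly_reverse m P) \<le> m + 1"
    and "poly_reverse (m + 1) ([:1, -c:] * poly_reverse m P) = [:- c, 1:] * P"
proof -
  have "degree ([:1, -c:] * poly_reverse m P) \<le> degree [:1, -c:] + degree (poly_reverse m P)"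
    by (rule degree_mult_le)
  then show "degree ([:1, -c:] * poly_reverse m P) \<le> m + 1"
    using degree_poly_reverse_le[of m P] by (simp split: if_split_asm)
  have "poly_reverse (1 + m) ([:1, -c:] * poly_reverse m P)
      = poly_reverse 1 [:1, -c:] * poly_reverse m (poly_reverse m P)"
    by (rule poly_reverse_mult) (simp_all add: degree_poly_reverse_le)
  then show "poly_reverse (m + 1) ([:1, -c:] * poly_reverse m P) = [:- c, 1:] * P"
    unfolding poly_reverse_linear poly_reverse_poly_reverse[OF assms] by (simp only: add.commute)
qed

lemma smult_poly_reverse_eq:
  assumes "coeff p 0 = 1" and e: "\<And>i. i \<in> {1..n} \<Longrightarrow> e i = c * coeff p i"
  shows "smult c (monom 1 n) + (\<Sum>i=1..n. smult (e i) (monom 1 (n - i))) = smult c (poly_reverse n p)"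
proof -
  have "{..n} = insert 0 {1..n}" by auto
  then have "poly_reverse n p = monom 1 n + (\<Sum>i=1..n. monom (coeff p i) (n - i))"
    using assms(1) by (simp add: poly_reverse_def)
  moreover have "(\<Sum>i=1..n. smult (e i) (monom 1 (n - i))) = (\<Sum>i=1..n. monom (c * coeff p i) (n - i))"
    using e by (intro sum.cong) (simp_all add: smult_monom)
  ultimately show ?thesis by (simp add: smult_add_right smult_sum_right smult_monom)
qed

section \<open>The Pade relation\<close>

lemma fps_nth_eq_of_square_diff:
  fixes A B U C :: "'a::field fps"
  assumes eq: "U * (A ^ 2 - B ^ 2) = fps_X ^ n * C"
    and "U $ 0 \<noteq> 0" "A $ 0 + B $ 0 \<noteq> 0" "k < n"
  shows "A $ k = B $ k"
proof -
  define V where "V = U * (A + B)"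
  have "V $ 0 \<noteq> 0" using assms by (simp add: V_def)
  then have "A - B = inverse V * (V * (A - B))"
    by (simp add: mult.assoc[symmetric] inverse_mult_eq_1)
  also have "V * (A - B) = U * (A ^ 2 - B ^ 2)"
    by (simp add: V_def power2_eq_square algebra_simps)
  finally have "A - B = fps_X ^ n * (inverse V * C)" by (simp add: eq ac_simps)
  then show ?thesis using \<open>k < n\<close> by (metis diff_eq_eq fps_X_power_mult_nth fps_add_nth add_0)
qed

lemma poly_reverse_identity:
  fixes \<alpha> \<beta> :: complex and P Q :: "complex poly"
  assumes deg: "degree P \<le> m" "degree Q \<le> m"
    and identity: "\<And>z. \<alpha> * ((z - a) * (z - b) * poly Q z ^ 2) + \<beta> * ((z - c) * (z - d) * poly P z ^ 2) = 2"
  shows "smult \<alpha> ([:1, -a:] * [:1, -b:] * poly_reverse m Q ^ 2)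
    + smult \<beta> ([:1, -c:] * [:1, -d:] * poly_reverse m P ^ 2) = smult 2 (monom 1 (2 * m + 2))"
proof (rule poly_eq_if_eval_nonzero_eq)
  fix t :: complex assume t: "t \<noteq> 0"
  define u where "u = 1 / t"
  have linear: "poly [:1, - e:] t = t * (u - e)" for e using t by (simp add: u_def field_simps)
  have "poly (smult \<alpha> ([:1, -a:] * [:1, -b:] * poly_reverse m Q ^ 2)
      + smult \<beta> ([:1, -c:] * [:1, -d:] * poly_reverse m P ^ 2)) t
      = \<alpha> * ((t * (u - a)) * (t * (u - b)) * (t ^ m * poly Q u) ^ 2)
        + \<beta> * ((t * (u - c)) * (t * (u - d)) * (t ^ m * poly P u) ^ 2)"
    by (simp only: poly_add poly_smult poly_mult poly_power linear poly_poly_reverse[OF _ t] deg u_def)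
  also have "\<dots> = (t * t * (t ^ m) ^ 2)
      * (\<alpha> * ((u - a) * (u - b) * poly Q u ^ 2) + \<beta> * ((u - c) * (u - d) * poly P u ^ 2))"
    by (simp add: algebra_simps power2_eq_square)
  also have "\<dots> = poly (smult 2 (monom 1 (2 * m + 2))) t"
    unfolding identity by (simp add: poly_monom power_add power_mult power2_eq_square mult_ac)
  finally show "poly (smult \<alpha> ([:1, -a:] * [:1, -b:] * poly_reverse m Q ^ 2)
      + smult \<beta> ([:1, -c:] * [:1, -d:] * poly_reverse m P ^ 2)) t = poly (smult 2 (monom 1 (2 * m + 2))) t" .
qed

lemma Fseq_fps_pade:
  fixes a b c d \<alpha> \<beta> :: complex and P Q :: "complex poly"
  assumes s: "s = (\<lambda>k. (a ^ k + b ^ k + c ^ k - d ^ k) / 2)"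
    and identity: "smult \<alpha> ([:1, -a:] * [:1, -b:] * Q ^ 2) + smult \<beta> ([:1, -c:] * [:1, -d:] * P ^ 2)
      = smult 2 (monom 1 n)"
    and "n > 0" "\<alpha> \<noteq> 0" "coeff Q 0 = 1" "coeff P 0 = 1" "k < n"
  shows "(fps_of_poly Q * Fseq_fps s) $ k = coeff ([:1, -c:] * P) k"
proof -
  define q p G where "q = fps_of_poly Q" and "p = fps_of_poly P" and "G = Fseq_fps s"
  have "coeff (smult \<alpha> ([:1, -a:] * [:1, -b:] * Q ^ 2) + smult \<beta> ([:1, -c:] * [:1, -d:] * P ^ 2)) 0 = 0"
    using identity \<open>n > 0\<close> by simp
  then have "\<alpha> + \<beta> = 0" using assms(5,6) by (simp add: coeff_mult_0 coeff_0_power)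
  then have \<beta>: "\<beta> = - \<alpha>" by (simp add: add_eq_0_iff)
  have linear: "fps_of_poly [:1, - e:] = one_minus e" for e :: complex
    by (simp add: fps_of_poly_linear')
  have fid: "fps_const \<alpha> * (one_minus a * one_minus b * q ^ 2) - fps_const \<alpha> * (one_minus c * one_minus d * p ^ 2)
      = 2 * fps_X ^ n"
    using arg_cong[OF identity, of fps_of_poly]
    by (simp add: \<beta> q_def p_def fps_of_poly_add fps_of_poly_smult fps_of_poly_mult fps_of_poly_power
        linear fps_of_poly_monom' numeral_fps_const)
  have G2: "G ^ 2 * one_minus d = one_minus a * one_minus b * one_minus c"
    unfolding G_def by (rule Fseq_fps_power_sums_square[OF s])
  have "(fps_const \<alpha> * one_minus d) * ((q * G) ^ 2 - (one_minus c * p) ^ 2)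
      = fps_const \<alpha> * q ^ 2 * (G ^ 2 * one_minus d) - fps_const \<alpha> * one_minus d * (one_minus c * p) ^ 2"
    by (simp add: algebra_simps power2_eq_square del: fps_const_mult)
  also have "\<dots> = one_minus c * (fps_const \<alpha> * (one_minus a * one_minus b * q ^ 2)
        - fps_const \<alpha> * (one_minus c * one_minus d * p ^ 2))"
    unfolding G2 by (simp add: algebra_simps power2_eq_square del: fps_const_mult)
  also have "\<dots> = fps_X ^ n * (2 * one_minus c)"
    unfolding fid by (simp only: mult_ac)
  finally have "(q * G) $ k = (one_minus c * p) $ k"
    by (rule fps_nth_eq_of_square_diff) (use assms in \<open>simp_all add: q_def p_def G_def\<close>)
  moreover have "fps_of_poly ([:1, -c:] * P) = one_minus c * p"
    by (simp only: fps_of_poly_mult linear p_def)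
  ultimately show ?thesis by (metis fps_of_poly_nth q_def G_def)
qed

section \<open>The Toeplitz system\<close>

lemma fps_of_poly_mult_Fseq_fps_nth:
  assumes "degree R \<le> \<mu>"
  shows "(fps_of_poly R * Fseq_fps s) $ k = (\<Sum>i\<le>\<mu>. coeff R i * Fseq s (int k - int i))"
proof -
  let ?f = "\<lambda>i. coeff R i * Fseq s (int k - int i)"
  have "(fps_of_poly R * Fseq_fps s) $ k = (\<Sum>i\<le>k. ?f i)"
    by (simp add: fps_mult_nth Fseq_fps_def atLeast0AtMost of_nat_diff)
  also have "\<dots> = (\<Sum>i\<le>max k \<mu>. ?f i)"
    by (rule sum.mono_neutral_left) (auto simp: Fseq_def)
  also have "\<dots> = (\<Sum>i\<le>\<mu>. ?f i)"
    by (rule sum.mono_neutral_right) (use assms in \<open>auto simp: coeff_eq_0\<close>)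
  finally show ?thesis .
qed

lemma det_FFimat_cramer:
  assumes deg: "degree R \<le> \<mu>" and R0: "coeff R 0 = 1"
    and vanish: "\<And>r. r < \<mu> \<Longrightarrow> (fps_of_poly R * Fseq_fps s) $ (\<nu> + 1 + r) = 0"
    and i: "1 \<le> i" "i \<le> \<mu>"
  shows "det (FFimat s \<nu> \<mu> i) = coeff R i * det (FFmat s \<nu> \<mu>)"
proof -
  define v where "v = vec \<mu> (\<lambda>c. coeff R (c + 1))"
  have FF: "FFmat s \<nu> \<mu> \<in> carrier_mat \<mu> \<mu>" by (simp add: FFmat_def)
  have system: "FFmat s \<nu> \<mu> *\<^sub>v v = vec \<mu> (\<lambda>r. - Fseq s (int \<nu> + int r + 1))"
  proof (rule eq_vecI)
    fix r assume "r < dim_vec (vec \<mu> (\<lambda>r. - Fseq s (int \<nu> + int r + 1)))"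
    then have r: "r < \<mu>" by simp
    have "0 = (\<Sum>i\<le>\<mu>. coeff R i * Fseq s (int (\<nu> + 1 + r) - int i))"
      using vanish[OF r] by (simp add: fps_of_poly_mult_Fseq_fps_nth[OF deg])
    also have "\<dots> = Fseq s (int \<nu> + int r + 1) + (\<Sum>c<\<mu>. FFmat s \<nu> \<mu> $$ (r, c) * vec_index v c)"
      using r by (simp add: sum.atMost_shift R0 FFmat_def v_def algebra_simps)
    also have "(\<Sum>c<\<mu>. FFmat s \<nu> \<mu> $$ (r, c) * vec_index v c) = vec_index (FFmat s \<nu> \<mu> *\<^sub>v v) r"
      using r FF by (simp add: scalar_prod_def v_def atLeast0LessThan)
    finally show "vec_index (FFmat s \<nu> \<mu> *\<^sub>v v) r = vec_index (vec \<mu> (\<lambda>r. - Fseq s (int \<nu> + int r + 1))) r"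
      using r by (simp add: eq_neg_iff_add_eq_0 add.commute)
  qed (simp add: FFmat_def)
  have "FFimat s \<nu> \<mu> i = replace_col (FFmat s \<nu> \<mu>) (FFmat s \<nu> \<mu> *\<^sub>v v) (i - 1)"
    unfolding system using i by (intro eq_matI) (auto simp: FFimat_def replace_col_def FFmat_def)
  also have "det \<dots> = vec_index v (i - 1) * det (FFmat s \<nu> \<mu>)"
    by (rule cramer_lemma_mat[OF FF]) (use i in \<open>auto simp: v_def\<close>)
  finally show ?thesis using i by (simp add: v_def)
qed

corollary det_FFimat_of_pade:
  assumes "degree Q \<le> m" "coeff Q 0 = 1" "degree V \<le> m + 1"
    and "\<And>k. k < 2 * m + 2 \<Longrightarrow> (fps_of_poly Q * Fseq_fps s) $ k = coeff V k"
    and "i \<in> {1..m}"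
  shows "det (FFimat s (m + 1) m i) = det (FFmat s (m + 1) m) * coeff Q i"
  using det_FFimat_cramer[OF assms(1,2), where \<nu> = "m + 1" and s = s and i = i] assms
  by (simp add: coeff_eq_0 mult.commute)

lemma poly_mult_eq_of_pade:
  fixes Q V R :: "'a::comm_ring_1 poly" and G :: "'a fps"
  assumes deg: "degree Q \<le> m" "degree V \<le> m + 1" "degree R \<le> m"
    and pade: "\<And>k. k < 2 * m + 2 \<Longrightarrow> (fps_of_poly Q * G) $ k = coeff V k"
    and gap: "\<And>k. m + 2 \<le> k \<Longrightarrow> k < 2 * m + 2 \<Longrightarrow> (fps_of_poly R * G) $ k = 0"
  shows "R * V = Q * truncate_fps (m + 2) (fps_of_poly R * G)"
proof (rule poly_eqI)
  fix k
  define W where "W = truncate_fps (m + 2) (fps_of_poly R * G)"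
  show "coeff (R * V) k = coeff (Q * W) k"
  proof (cases "k < 2 * m + 2")
    case True
    have W: "(fps_of_poly R * G) $ j = coeff W j" if "j \<le> k" for j
      using gap[of j] True that by (auto simp: W_def coeff_truncate_fps)
    have "coeff (R * V) k = (\<Sum>i\<le>k. coeff R i * (fps_of_poly Q * G) $ (k - i))"
      using True by (simp add: coeff_mult pade)
    also have "\<dots> = (fps_of_poly R * (fps_of_poly Q * G)) $ k"
      by (simp only: fps_mult_nth[of "fps_of_poly R"] atLeast0AtMost fps_of_poly_nth)
    also have "fps_of_poly R * (fps_of_poly Q * G) = fps_of_poly Q * (fps_of_poly R * G)"
      by (simp only: ac_simps)
    also have "(fps_of_poly Q * (fps_of_poly R * G)) $ k = coeff (Q * W) k"
      by (simp only: fps_mult_nth[of "fps_of_poly Q"] atLeast0AtMost fps_of_poly_nth coeff_mult W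
          atMost_iff diff_le_self cong: sum.cong)
    finally show ?thesis .
  next
    case False
    have "degree W < m + 2" unfolding W_def by (rule degree_truncate_fps) simp
    then have "degree (R * V) < k" "degree (Q * W) < k"
      using degree_mult_le[of R V] degree_mult_le[of Q W] deg False by linarith+
    then show ?thesis by (simp add: coeff_eq_0)
  qed
qed

lemma poly_eq_0_of_pade_gap:
  fixes V R :: "'a::field_char_0 poly" and G :: "'a fps" and y :: "nat \<Rightarrow> 'a"
  assumes deg: "degree V \<le> m + 1" "degree R \<le> m" and R0: "coeff R 0 = 0"
    and pade: "\<And>k. k < 2 * m + 2 \<Longrightarrow>
      (fps_of_poly (poly_reverse m (\<Prod>j=1..m. [:- y j, 1:])) * G) $ k = coeff V k"
    and sep: "\<And>j. j \<in> {1..m} \<Longrightarrow> poly (poly_reverse (m + 1) V) (y j) \<noteq> 0"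
    and gap: "\<And>k. m + 2 \<le> k \<Longrightarrow> k < 2 * m + 2 \<Longrightarrow> (fps_of_poly R * G) $ k = 0"
  shows "R = 0"
proof -
  let ?Q = "\<Prod>j=1..m. [:- y j, 1:]"
  define W where "W = truncate_fps (m + 2) (fps_of_poly R * G)"
  have degW: "degree W \<le> m + 1"
    using degree_truncate_fps[of "m + 2"] by (simp add: W_def less_Suc_eq_le)
  have "R * V = poly_reverse m ?Q * W"
    unfolding W_def by (rule poly_mult_eq_of_pade[OF degree_poly_reverse_le deg(1,2) pade gap])
  then have "poly_reverse m R * poly_reverse (m + 1) V = poly_reverse (m + (m + 1)) (poly_reverse m ?Q * W)"
    by (simp only: poly_reverse_mult[OF deg(2,1), symmetric])
  also have "\<dots> = ?Q * poly_reverse (m + 1) W"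
    by (simp only: poly_reverse_mult[OF degree_poly_reverse_le degW] poly_reverse_prod_linear(2))
  finally have "?Q dvd poly_reverse m R * poly_reverse (m + 1) V"
    by (simp only: dvd_triv_left)
  from prod_linear_dvd_cancel[OF finite_atLeastAtMost sep this]
  have "poly_reverse m R = 0" by (rule poly_reverse_eq_0_of_prod_dvd[OF R0])
  then show "R = 0" by (metis poly_reverse_poly_reverse[OF deg(2)] poly_reverse_0)
qed

lemma FFmat_nonsingular:
  fixes V :: "complex poly" and y :: "nat \<Rightarrow> complex"
  assumes "degree V \<le> m + 1"
    and pade: "\<And>k. k < 2 * m + 2 \<Longrightarrow>
      (fps_of_poly (poly_reverse m (\<Prod>j=1..m. [:- y j, 1:])) * Fseq_fps s) $ k = coeff V k"
    and sep: "\<And>j. j \<in> {1..m} \<Longrightarrow> poly (poly_reverse (m + 1) V) (y j) \<noteq> 0"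
  shows "det (FFmat s (m + 1) m) \<noteq> 0"
proof
  let ?F = "FFmat s (m + 1) m"
  have F: "?F \<in> carrier_mat m m" by (simp add: FFmat_def)
  assume "det ?F = 0"
  then obtain v where v: "v \<in> carrier_vec m" "v \<noteq> 0\<^sub>v m" "?F *\<^sub>v v = 0\<^sub>v m"
    using det_0_iff_vec_prod_zero[OF F] by blast
  define R where "R = (\<Sum>c<m. monom (vec_index v c) (c + 1))"
  have coeffR: "coeff R k = (if 1 \<le> k \<and> k \<le> m then vec_index v (k - 1) else 0)" for k
    unfolding R_def coeff_sum coeff_monom by (cases k) auto
  have degR: "degree R \<le> m" by (rule degree_le) (simp add: coeffR)
  have gap: "(fps_of_poly R * Fseq_fps s) $ k = 0" if k: "m + 2 \<le> k" "k < 2 * m + 2" for k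
  proof -
    have "(fps_of_poly R * Fseq_fps s) $ k = (\<Sum>i\<le>m. coeff R i * Fseq s (int k - int i))"
      by (rule fps_of_poly_mult_Fseq_fps_nth[OF degR])
    also have "\<dots> = (\<Sum>c<m. coeff R (Suc c) * Fseq s (int k - int (Suc c)))"
      by (simp add: sum.atMost_shift coeffR)
    also have "\<dots> = (\<Sum>c<m. ?F $$ (k - (m + 2), c) * vec_index v c)"
      using k by (intro sum.cong) (simp_all add: coeffR FFmat_def of_nat_diff diff_diff_eq)
    also have "\<dots> = vec_index (?F *\<^sub>v v) (k - (m + 2))"
      using k v(1) by (simp add: FFmat_def scalar_prod_def atLeast0LessThan)
    finally show ?thesis using k v(3) by simp
  qed
  have "R = 0"
    by (rule poly_eq_0_of_pade_gap[OF assms(1) degR _ pade sep gap]) (simp add: coeffR)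
  have "v = 0\<^sub>v m"
  proof (rule eq_vecI)
    fix c assume "c < dim_vec (0\<^sub>v m)"
    then show "vec_index v c = vec_index (0\<^sub>v m) c"
      using coeffR[of "c + 1"] by (simp add: \<open>R = 0\<close>)
  qed (use v(1) in simp)
  with v(2) show False by simp
qed

section \<open>The two representations of \<open>T\<close>\<close>

context
  fixes T :: "complex poly" and a b c d :: complex and m :: nat and x y :: "nat \<Rightarrow> complex"
  assumes nonconstant: "degree T \<noteq> 0"
    and hx: "\<And>z. poly T z = 1 - 2 * (z - c) * (z - d) * (\<Prod>j=1..m. (z - x j) ^ 2)
               / ((a - c) * (a - d) * (\<Prod>j=1..m. (a - x j) ^ 2))"
    and hy: "\<And>z. poly T z = -1 + 2 * (z - a) * (z - b) * (\<Prod>j=1..m. (z - y j) ^ 2)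
               / ((c - a) * (c - b) * (\<Prod>j=1..m. (c - y j) ^ 2))"
begin

lemma representations_sum:
  obtains \<alpha> \<beta> where "\<alpha> \<noteq> 0"
    and "\<And>z. \<alpha> * ((z - a) * (z - b) * poly (\<Prod>j=1..m. [:- y j, 1:]) z ^ 2)
      + \<beta> * ((z - c) * (z - d) * poly (\<Prod>j=1..m. [:- x j, 1:]) z ^ 2) = 2"
proof
  define Dx where "Dx = (a - c) * (a - d) * (\<Prod>j=1..m. (a - x j) ^ 2)"
  define Dy where "Dy = (c - a) * (c - b) * (\<Prod>j=1..m. (c - y j) ^ 2)"
  show "2 / Dy \<noteq> 0"
  proof
    assume "2 / Dy = 0"
    then have "Dy = 0" by simp
    then have "poly T z = poly [:-1:] z" for z using hy[of z] unfolding Dy_def[symmetric] by simp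
    then have "poly T = poly [:-1:]" ..
    then show False using nonconstant by (simp only: poly_eq_poly_eq_iff) simp
  qed
  show "2 / Dy * ((z - a) * (z - b) * poly (\<Prod>j=1..m. [:- y j, 1:]) z ^ 2)
      + 2 / Dx * ((z - c) * (z - d) * poly (\<Prod>j=1..m. [:- x j, 1:]) z ^ 2) = 2" for z
  proof -
    have sum: "B + A = 2" if "t = 1 - A" "t = -1 + B" for t A B :: complex
      using that by (simp add: algebra_simps)
    show ?thesis
      unfolding poly_prod_linear_square Dx_def Dy_def times_divide_eq_left mult.assoc
      by (rule sum[OF hx[of z, unfolded mult.assoc] hy[of z, unfolded mult.assoc]])
  qed
qed

lemma representations_roots_separated:
  assumes "i \<in> {1..m}"
  shows "poly ([:- c, 1:] * (\<Prod>j=1..m. [:- x j, 1:])) (y i) \<noteq> 0"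
proof
  assume "poly ([:- c, 1:] * (\<Prod>j=1..m. [:- x j, 1:])) (y i) = 0"
  then have zero: "(y i - c) * poly (\<Prod>j=1..m. [:- x j, 1:]) (y i) = 0" by auto
  have "2 * (y i - c) * (y i - d) * (\<Prod>j=1..m. (y i - x j) ^ 2)
      = 2 * (y i - d) * poly (\<Prod>j=1..m. [:- x j, 1:]) (y i) * ((y i - c) * poly (\<Prod>j=1..m. [:- x j, 1:]) (y i))"
    unfolding poly_prod_linear_square[symmetric] by (simp only: power2_eq_square mult_ac)
  also have "\<dots> = 0" by (simp only: zero mult_zero_right)
  finally have "2 * (y i - c) * (y i - d) * (\<Prod>j=1..m. (y i - x j) ^ 2) = 0" .
  then have "poly T (y i) = 1" using hx[of "y i"] by simp
  moreover have "(\<Prod>j=1..m. (y i - y j) ^ 2) = 0" using assms by (auto simp: prod_zero_iff)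
  then have "poly T (y i) = -1" using hy[of "y i"] by simp
  ultimately show False by simp
qed

end

theorem theorem2:
  fixes m n :: nat and a b c d :: complex and T U :: "complex poly"
    and x y :: "nat \<Rightarrow> complex"
  assumes hn: "n = 2 * m + 2"
    and hT: "degree T = n" and hU: "degree U \<le> n - 2"
    and hpell: "T ^ 2 - Hpoly a b c d * U ^ 2 = 1"
    and hx: "\<And>z. poly T z = 1 - 2 * (z - c) * (z - d) * (\<Prod>j=1..m. (z - x j) ^ 2)
               / ((a - c) * (a - d) * (\<Prod>j=1..m. (a - x j) ^ 2))"
    and hy: "\<And>z. poly T z = -1 + 2 * (z - a) * (z - b) * (\<Prod>j=1..m. (z - y j) ^ 2)
               / ((c - a) * (c - b) * (\<Prod>j=1..m. (c - y j) ^ 2))"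
  defines "s \<equiv> (\<lambda>k::nat. (a ^ k + b ^ k + c ^ k - d ^ k) / 2)"
  shows "det (FFmat s (m + 1) m) \<noteq> 0 \<and>
    smult (det (FFmat s (m + 1) m)) (monom 1 m)
      + (\<Sum>i=1..m. smult (det (FFimat s (m + 1) m i)) (monom 1 (m - i)))
    = smult (det (FFmat s (m + 1) m)) (\<Prod>j=1..m. [:- y j, 1:])"
proof -
  define P where "P = (\<Prod>j=1..m. [:- x j, 1:])"
  define Q where "Q = (\<Prod>j=1..m. [:- y j, 1:])"
  define V where "V = [:1, -c:] * poly_reverse m P"
  text \<open>Only the two representations of \<open>T\<close> are used, not the Pell equation itself.\<close>
  have T: "degree T \<noteq> 0" using hT hn by simp
  obtain \<alpha> \<beta> where "\<alpha> \<noteq> 0" and sum: "\<And>z. \<alpha> * ((z - a) * (z - b) * poly Q z ^ 2)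
      + \<beta> * ((z - c) * (z - d) * poly P z ^ 2) = 2"
    using representations_sum[OF T hx hy] unfolding P_def Q_def by blast
  have Q: "coeff (poly_reverse m Q) 0 = 1" "poly_reverse m (poly_reverse m Q) = Q"
    unfolding Q_def by (rule poly_reverse_prod_linear)+
  have P: "coeff (poly_reverse m P) 0 = 1" "degree P = m"
    unfolding P_def by (rule poly_reverse_prod_linear) (simp add: prod_linear_degree)
  have V: "degree V \<le> m + 1" "poly_reverse (m + 1) V = [:- c, 1:] * P"
    unfolding V_def by (rule poly_reverse_linear_mult, simp add: P)+
  have pade: "(fps_of_poly (poly_reverse m Q) * Fseq_fps s) $ k = coeff V k" if "k < 2 * m + 2" for k
    unfolding V_def
    by (rule Fseq_fps_pade[OF meta_eq_to_obj_eq[OF s_def] poly_reverse_identity[OF _ _ sum]])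
       (use P Q that \<open>\<alpha> \<noteq> 0\<close> in \<open>simp_all add: Q_def prod_linear_degree\<close>)
  have sep: "poly (poly_reverse (m + 1) V) (y i) \<noteq> 0" if "i \<in> {1..m}" for i
    unfolding V(2) P_def by (rule representations_roots_separated[OF T hx hy that])
  have "det (FFmat s (m + 1) m) \<noteq> 0"
    by (rule FFmat_nonsingular[OF V(1) pade[unfolded Q_def] sep])
  moreover have "det (FFimat s (m + 1) m i) = det (FFmat s (m + 1) m) * coeff (poly_reverse m Q) i"
    if "i \<in> {1..m}" for i
    by (rule det_FFimat_of_pade[OF degree_poly_reverse_le Q(1) V(1) pade that])
  ultimately show ?thesis
    using smult_poly_reverse_eq[OF Q(1), where n = m and e = "\<lambda>i. det (FFimat s (m + 1) m i)", unfolded Q(2)]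
    unfolding Q_def by simp
qed

end
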